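(* Let $P=\{x\in\mathbb{R}^n: Ax\ge b\}$ with rational data be full-dimensional and pointed, let $\mathcal{I}\subseteq\{1,\dots,n\}$, $P_I=\{x\in P: x_j\in\mathbb{Z}\ \forall j\in\mathcal{I}\}$, and let $c\in\mathbb{R}^n$. Let $\mathcal{T}$ be finite and $P^t=\{x\in P: D^tx\ge D^t_0\}$, $t\in\mathcal{T}$, be the terms of a disjunction with $P_I\subseteq P_D:=\operatorname{cl}\operatorname{conv}(\bigcup_t P^t)$. For each $t\in\mathcal{T}$, let $p^t$ be a basic optimal solution to $\min\{c^\top x: x\in P^t\}$ with an associated cobasis, let $C^t$ be the basis cone at $p^t$, with extreme rays $r^{t1},\dots,r^{tn}$. Then the simple point-ray collection $(\mathcal{P}^0,\mathcal{R}^0)$, where $\mathcal{P}^0=\{p^t: t\in\mathcal{T}\}$ and $\mathcal{R}^0=\{r^{tj}: t\in\mathcal{T}, j\in[n]\}$, is proper.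
   Context: A cobasis of the basic solution $p^t$ is a set of $n$ linearly independent inequalities from the system defining $P^t$ (those corresponding to nonbasic variables) that are tight at $p^t$; the basis cone $C^t$ is the intersection of these $n$ half-spaces, a cone with apex $p^t$ and $n$ extreme rays. For finite $\mathcal{P},\mathcal{R}\subset\mathbb{R}^n$, the point-ray linear program (PRLP) has feasible region $\{(\alpha,\beta): \alpha^\top p\ge\beta\ \forall p\in\mathcal{P},\ \alpha^\top r\ge 0\ \forall r\in\mathcal{R}\}$, and $(\mathcal{P},\mathcal{R})$ is proper if $\alpha^\top x\ge\beta$ is valid for $P_I$ whenever $(\alpha,\beta)$ is PRLP-feasible. It is assumed (implicitly, for the definition) that each $\min\{c^\top x: x\in P^t\}$ has a basic optimal solution. *)

theory Defs
  imports "HOL-Analysis.Analysis"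
begin

definition polyh :: "('i \<Rightarrow> real^'n) \<Rightarrow> ('i \<Rightarrow> real) \<Rightarrow> 'i set \<Rightarrow> (real^'n) set" where
  "polyh g g0 K = {x. \<forall>i\<in>K. g i \<bullet> x \<ge> g0 i}"

definition full_dimensional :: "(real^'n) set \<Rightarrow> bool" where
  "full_dimensional S \<longleftrightarrow> interior S \<noteq> {}"

definition pointed :: "(real^'n) set \<Rightarrow> bool" where
  "pointed S \<longleftrightarrow> \<not> (\<exists>x\<in>S. \<exists>d. d \<noteq> 0 \<and> (\<forall>l::real. x + l *\<^sub>R d \<in> S))"

definition int_points :: "(real^'n) set \<Rightarrow> 'n set \<Rightarrow> (real^'n) set" where
  "int_points S I = {x \<in> S. \<forall>j\<in>I. x $ j \<in> \<int>}"

definition cobasis :: "('i \<Rightarrow> real^'n) \<Rightarrow> ('i \<Rightarrow> real) \<Rightarrow> 'i set \<Rightarrow> real^'n \<Rightarrow> 'i set \<Rightarrow> bool" where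
  "cobasis g g0 K p N \<longleftrightarrow> N \<subseteq> K \<and> card N = CARD('n) \<and> inj_on g N \<and>
     \<not> dependent (g ` N) \<and> (\<forall>i\<in>N. g i \<bullet> p = g0 i)"


definition extreme_ray_dir :: "(real^'n) set \<Rightarrow> real^'n \<Rightarrow> real^'n \<Rightarrow> bool" where
  "extreme_ray_dir C p r \<longleftrightarrow> r \<noteq> 0 \<and> ((\<lambda>l::real. p + l *\<^sub>R r) ` {0..}) face_of C"

definition prlp_feasible :: "(real^'n) set \<Rightarrow> (real^'n) set \<Rightarrow> real^'n \<Rightarrow> real \<Rightarrow> bool" where
  "prlp_feasible Pts Rays \<alpha> \<beta> \<longleftrightarrow> (\<forall>p\<in>Pts. \<alpha> \<bullet> p \<ge> \<beta>) \<and> (\<forall>r\<in>Rays. \<alpha> \<bullet> r \<ge> 0)"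

definition proper :: "(real^'n) set \<Rightarrow> (real^'n) set \<Rightarrow> (real^'n) set \<Rightarrow> bool" where
  "proper PI Pts Rays \<longleftrightarrow> (\<forall>\<alpha> \<beta>. prlp_feasible Pts Rays \<alpha> \<beta> \<longrightarrow> (\<forall>x\<in>PI. \<alpha> \<bullet> x \<ge> \<beta>))"

text \<open>The inequality system of a disjunctive term: rows of A (Inl i, i < m) and rows of D (Inr k, k < q).\<close>
definition sysg :: "(nat \<Rightarrow> real^'n) \<Rightarrow> (nat \<Rightarrow> real^'n) \<Rightarrow> nat + nat \<Rightarrow> real^'n" where
  "sysg A D = case_sum A D"
definition sysb :: "(nat \<Rightarrow> real) \<Rightarrow> (nat \<Rightarrow> real) \<Rightarrow> nat + nat \<Rightarrow> real" where
  "sysb b D0 = case_sum b D0"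
definition sysK :: "nat \<Rightarrow> nat \<Rightarrow> (nat + nat) set" where
  "sysK m q = Inl ` {..<m} \<union> Inr ` {..<q}"

end

theory Submission
  imports Defs
begin

(* Each term P^t lies in its basis cone C^t, and C^t is p^t plus the conic hull of the
   vectors dual to the cobasis rows; these dual vectors span the extreme rays of C^t.
   A PRLP-feasible (alpha, beta) is nonnegative on every ray, hence
   alpha x >= alpha p^t >= beta on every P^t. The halfspace {x. alpha x >= beta} is closed
   and convex, so it contains P_D and thus P_I. *)

lemma polyh_eq_INT: "polyh g g0 K = (\<Inter>i\<in>K. {x. g0 i \<le> g i \<bullet> x})"
  by (auto simp: polyh_def)

lemma convex_polyh: "convex (polyh g g0 K)"
  unfolding polyh_eq_INT by (intro convex_INT) (simp add: convex_halfspace_ge)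

lemma polyh_antimono: "N \<subseteq> K \<Longrightarrow> polyh g g0 K \<subseteq> polyh g g0 N"
  by (auto simp: polyh_def)

lemma face_of_polyh_tight:
  assumes "J \<subseteq> K"
  shows "{y \<in> polyh g g0 K. \<forall>i\<in>J. g i \<bullet> y = g0 i} face_of polyh g g0 K"
proof -
  let ?P = "polyh g g0 K"
  have "{y \<in> ?P. \<forall>i\<in>J. g i \<bullet> y = g0 i} = \<Inter>(insert ?P ((\<lambda>i. ?P \<inter> {y. g i \<bullet> y = g0 i}) ` J))"
    by auto
  also have "\<dots> face_of ?P"
  proof (rule face_of_Inter)
    have "?P \<inter> {y. g i \<bullet> y = g0 i} face_of ?P" if "i \<in> J" for i
      using that assms by (intro face_of_Int_supporting_hyperplane_ge convex_polyh)
        (auto simp: polyh_def)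
    then show "F face_of ?P" if "F \<in> insert ?P ((\<lambda>i. ?P \<inter> {y. g i \<bullet> y = g0 i}) ` J)" for F
      using that face_of_refl[OF convex_polyh] by blast
  qed auto
  finally show ?thesis .
qed

context
  fixes g :: "'i \<Rightarrow> real^'n" and g0 :: "'i \<Rightarrow> real" and K N :: "'i set" and p :: "real^'n"
  assumes cob: "cobasis g g0 K p N"
begin

lemma cobasis_finite: "finite N"
  using cob card_ge_0_finite[of N] by (simp add: cobasis_def)

lemma cobasis_card_image: "card (g ` N) = CARD('n)"
  using cob by (simp add: cobasis_def card_image)

lemma cobasis_orthogonal_eq_0:
  assumes "\<And>i. i \<in> N \<Longrightarrow> g i \<bullet> w = 0"
  shows "w = 0"
proof -
  have "span (g ` N) = UNIV"
    using cob cobasis_finite cobasis_card_image card_eq_dim[of "g ` N" UNIV]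
    by (auto simp: cobasis_def)
  moreover have "orthogonal w y" if "y \<in> g ` N" for y
    using that assms by (auto simp: orthogonal_def inner_commute)
  ultimately have "orthogonal w w"
    by (metis UNIV_I orthogonal_to_span)
  then show ?thesis by (simp add: orthogonal_def)
qed

lemma cobasis_dual_vector:
  assumes k: "k \<in> N"
  shows "\<exists>e. \<forall>i\<in>N. g i \<bullet> e = (if i = k then 1 else 0)"
proof -
  have "dim (g ` (N - {k})) \<le> card (g ` (N - {k}))"
    using cobasis_finite by (intro dim_le_card) (auto intro: span_base)
  also have "\<dots> \<le> card (N - {k})"
    using cobasis_finite card_image_le by blast
  also have "\<dots> < CARD('n)"
    using cob cobasis_finite k by (simp add: cobasis_def card_Diff_singleton)
  finally have "dim (g ` (N - {k})) < DIM(real^'n)" by simp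
  then obtain v where v: "v \<noteq> 0" "\<And>y. y \<in> span (g ` (N - {k})) \<Longrightarrow> orthogonal v y"
    using orthogonal_to_subspace_exists by blast
  have v_orth: "g i \<bullet> v = 0" if "i \<in> N" "i \<noteq> k" for i
    using v(2)[of "g i"] that by (auto simp: orthogonal_def inner_commute intro: span_base)
  have "g k \<bullet> v \<noteq> 0"
    using v(1) v_orth cobasis_orthogonal_eq_0[of v] by metis
  then show ?thesis
    by (intro exI[of _ "(1 / (g k \<bullet> v)) *\<^sub>R v"]) (auto simp: v_orth)
qed

context
  fixes e :: "'i \<Rightarrow> real^'n"
  assumes dual: "\<And>k i. k \<in> N \<Longrightarrow> i \<in> N \<Longrightarrow> g i \<bullet> e k = (if i = k then 1 else 0)"
begin

lemma cobasis_dual_expansion: "v = (\<Sum>k\<in>N. (g k \<bullet> v) *\<^sub>R e k)"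
proof -
  have "g i \<bullet> (\<Sum>k\<in>N. (g k \<bullet> v) *\<^sub>R e k) = g i \<bullet> v" if i: "i \<in> N" for i
  proof -
    have "g i \<bullet> (\<Sum>k\<in>N. (g k \<bullet> v) *\<^sub>R e k) = (\<Sum>k\<in>N. if k = i then g k \<bullet> v else 0)"
      unfolding inner_sum_right using i dual by (intro sum.cong) auto
    then show ?thesis using i cobasis_finite by simp
  qed
  then have "v - (\<Sum>k\<in>N. (g k \<bullet> v) *\<^sub>R e k) = 0"
    by (intro cobasis_orthogonal_eq_0) (simp add: inner_diff_right)
  then show ?thesis by simp
qed

lemma cobasis_edge_eq_ray:
  assumes k: "k \<in> N"
  shows "{y \<in> polyh g g0 N. \<forall>i\<in>N - {k}. g i \<bullet> y = g0 i} = (\<lambda>l. p + l *\<^sub>R e k) ` {0..}"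
proof (intro equalityI subsetI)
  have tight: "\<And>i. i \<in> N \<Longrightarrow> g i \<bullet> p = g0 i"
    using cob by (simp add: cobasis_def)
  fix y
  assume y: "y \<in> {y \<in> polyh g g0 N. \<forall>i\<in>N - {k}. g i \<bullet> y = g0 i}"
  have "y - p = (\<Sum>i\<in>N. (g i \<bullet> (y - p)) *\<^sub>R e i)"
    by (rule cobasis_dual_expansion)
  also have "\<dots> = (\<Sum>i\<in>N. if i = k then (g i \<bullet> (y - p)) *\<^sub>R e i else 0)"
    using y tight by (intro sum.cong) (auto simp: inner_diff_right)
  also have "\<dots> = (g k \<bullet> (y - p)) *\<^sub>R e k"
    using k cobasis_finite by simp
  finally have "y = p + (g k \<bullet> (y - p)) *\<^sub>R e k" by (simp add: algebra_simps)
  moreover have "g k \<bullet> (y - p) \<ge> 0"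
    using y k tight by (auto simp: polyh_def inner_diff_right)
  ultimately show "y \<in> (\<lambda>l. p + l *\<^sub>R e k) ` {0..}" by auto
next
  fix y
  assume "y \<in> (\<lambda>l. p + l *\<^sub>R e k) ` {0..}"
  then obtain l where "l \<ge> 0" "y = p + l *\<^sub>R e k" by auto
  moreover have "g i \<bullet> (p + l *\<^sub>R e k) = g0 i + (if i = k then l else 0)" if "i \<in> N" for i
    using that k dual cob by (simp add: cobasis_def inner_add_right)
  ultimately show "y \<in> {y \<in> polyh g g0 N. \<forall>i\<in>N - {k}. g i \<bullet> y = g0 i}"
    by (auto simp: polyh_def)
qed

lemma cobasis_dual_extreme_ray:
  assumes "k \<in> N"
  shows "extreme_ray_dir (polyh g g0 N) p (e k)"
proof -
  have "{y \<in> polyh g g0 N. \<forall>i\<in>N - {k}. g i \<bullet> y = g0 i} face_of polyh g g0 N"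
    by (rule face_of_polyh_tight) blast
  then have "(\<lambda>l. p + l *\<^sub>R e k) ` {0..} face_of polyh g g0 N"
    by (simp only: cobasis_edge_eq_ray[OF assms])
  moreover have "e k \<noteq> 0"
    using dual[OF assms assms] by auto
  ultimately show ?thesis
    by (simp add: extreme_ray_dir_def)
qed

end

lemma basis_cone_inner_ge_apex:
  assumes rays_nonneg: "\<And>d. extreme_ray_dir (polyh g g0 N) p d \<Longrightarrow> 0 \<le> \<alpha> \<bullet> d"
    and x: "x \<in> polyh g g0 N"
  shows "\<alpha> \<bullet> p \<le> \<alpha> \<bullet> x"
proof -
  have "\<forall>k\<in>N. \<exists>e. \<forall>i\<in>N. g i \<bullet> e = (if i = k then 1 else 0)"
    using cobasis_dual_vector by blast
  then obtain e where "\<forall>k\<in>N. \<forall>i\<in>N. g i \<bullet> e k = (if i = k then 1 else 0)"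
    by (rule bchoice[THEN exE])
  then have dual: "\<And>k i. k \<in> N \<Longrightarrow> i \<in> N \<Longrightarrow> g i \<bullet> e k = (if i = k then 1 else 0)"
    by blast
  have "0 \<le> (\<Sum>k\<in>N. (g k \<bullet> (x - p)) * (\<alpha> \<bullet> e k))"
  proof (intro sum_nonneg mult_nonneg_nonneg)
    show "0 \<le> g k \<bullet> (x - p)" if "k \<in> N" for k
      using that x cob by (auto simp: polyh_def cobasis_def inner_diff_right)
    show "0 \<le> \<alpha> \<bullet> e k" if "k \<in> N" for k
      using rays_nonneg cobasis_dual_extreme_ray[OF dual that] .
  qed
  also have "\<dots> = \<alpha> \<bullet> (\<Sum>k\<in>N. (g k \<bullet> (x - p)) *\<^sub>R e k)"
    by (simp add: inner_sum_right)
  also have "\<dots> = \<alpha> \<bullet> (x - p)"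
    by (simp only: cobasis_dual_expansion[OF dual, of "x - p", symmetric])
  finally show ?thesis by (simp add: inner_diff_right)
qed

end

theorem proposition1:
  fixes A :: "nat \<Rightarrow> real^'n" and b :: "nat \<Rightarrow> real" and m :: nat
    and I :: "'n set" and c :: "real^'n"
    and T :: "'t set"
    and D :: "'t \<Rightarrow> nat \<Rightarrow> real^'n" and D0 :: "'t \<Rightarrow> nat \<Rightarrow> real" and q :: "'t \<Rightarrow> nat"
    and p :: "'t \<Rightarrow> real^'n" and N :: "'t \<Rightarrow> (nat + nat) set"
    and r :: "'t \<Rightarrow> 'n \<Rightarrow> real^'n"
  assumes rational: "\<forall>i<m. (\<forall>j. A i $ j \<in> \<rat>) \<and> b i \<in> \<rat>"
    and fulldim: "full_dimensional (polyh A b {..<m})"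
    and pointed: "pointed (polyh A b {..<m})"
    and finT: "finite T"
    and disj: "int_points (polyh A b {..<m}) I
        \<subseteq> closure (convex hull (\<Union>t\<in>T. polyh (sysg A (D t)) (sysb b (D0 t)) (sysK m (q t))))"
    and popt: "\<forall>t\<in>T. p t \<in> polyh (sysg A (D t)) (sysb b (D0 t)) (sysK m (q t)) \<and>
        (\<forall>x\<in>polyh (sysg A (D t)) (sysb b (D0 t)) (sysK m (q t)). c \<bullet> p t \<le> c \<bullet> x)"
    and cob: "\<forall>t\<in>T. cobasis (sysg A (D t)) (sysb b (D0 t)) (sysK m (q t)) (p t) (N t)"
    and rays: "\<forall>t\<in>T. \<forall>j. extreme_ray_dir (polyh (sysg A (D t)) (sysb b (D0 t)) (N t)) (p t) (r t j)"
    and allrays: "\<forall>t\<in>T. \<forall>d. extreme_ray_dir (polyh (sysg A (D t)) (sysb b (D0 t)) (N t)) (p t) d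
        \<longrightarrow> (\<exists>j. \<exists>l>0. d = l *\<^sub>R r t j)"
  shows "proper (int_points (polyh A b {..<m}) I) (p ` T) {r t j |t j. t \<in> T}"
  unfolding proper_def prlp_feasible_def
proof (intro allI impI ballI)
  fix \<alpha> \<beta> x
  assume feas: "(\<forall>y\<in>p ` T. \<beta> \<le> \<alpha> \<bullet> y) \<and> (\<forall>d\<in>{r t j |t j. t \<in> T}. 0 \<le> \<alpha> \<bullet> d)"
    and x: "x \<in> int_points (polyh A b {..<m}) I"
  let ?P = "\<lambda>t. polyh (sysg A (D t)) (sysb b (D0 t)) (sysK m (q t))"
  let ?C = "\<lambda>t. polyh (sysg A (D t)) (sysb b (D0 t)) (N t)"
  have "?P t \<subseteq> {y. \<beta> \<le> \<alpha> \<bullet> y}" if t: "t \<in> T" for t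
  proof
    fix y assume "y \<in> ?P t"
    moreover have cob_t: "cobasis (sysg A (D t)) (sysb b (D0 t)) (sysK m (q t)) (p t) (N t)"
      using cob t by blast
    ultimately have y: "y \<in> ?C t"
      using polyh_antimono[of "N t" "sysK m (q t)"] by (auto simp: cobasis_def)
    have rays_nonneg: "0 \<le> \<alpha> \<bullet> d" if d: "extreme_ray_dir (?C t) (p t) d" for d
    proof -
      obtain j l where "l > 0" "d = l *\<^sub>R r t j"
        using allrays t d by blast
      moreover have "0 \<le> \<alpha> \<bullet> r t j"
        using feas t by blast
      ultimately show ?thesis by simp
    qed
    have "\<beta> \<le> \<alpha> \<bullet> p t"
      using feas t by blast
    also have "\<dots> \<le> \<alpha> \<bullet> y"
      by (rule basis_cone_inner_ge_apex[OF cob_t rays_nonneg y])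
    finally show "y \<in> {y. \<beta> \<le> \<alpha> \<bullet> y}" by simp
  qed
  then have "closure (convex hull (\<Union>t\<in>T. ?P t)) \<subseteq> {y. \<beta> \<le> \<alpha> \<bullet> y}"
    by (intro closure_minimal hull_minimal) (auto simp: convex_halfspace_ge closed_halfspace_ge)
  then show "\<beta> \<le> \<alpha> \<bullet> x" using disj x by blast
qed

end
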